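(* Let $\mathcal{L}\subset\mathcal{L}_*$ be lineages with hierarchical generators $\mathcal{H},\mathcal{H}_*$, $\mathcal{R}=\mathcal{L}_*\setminus\mathcal{L}$ and $\mathcal{M}=\mathcal{R}\cap\mathcal{H}$. Then (i) for every $\psi_0\in\mathcal{R}$ there exist $k\ge0$ and $\psi_1,\dots,\psi_k$ such that $\psi_k\in\mathcal{M}$, $\psi_j\in\mathcal{R}\setminus\mathcal{M}$ and $\psi_j\in\mathrm{ch}(\psi_{j+1})$ for $j\in\{0,\dots,k-1\}$; (ii) for every $\varphi_*\in\mathcal{H}_*\setminus\mathcal{H}$ there is $\psi\in\mathcal{R}$ with $\varphi_*\in\mathrm{ch}(\psi)$; (iii) for every $\varphi_*\in\mathcal{H}_*\setminus\mathcal{H}$ there are $k\ge1$ and $\varphi\in\mathcal{M}$ with $\varphi_*\in\mathrm{ch}^k(\varphi)$.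
   Context: Fix integers $d\ge1$, $n\ge2$, $m\ge2$; $s=n-1$, $p=m-1$. B-splines $\varphi^\ell_{\vec i}(\vec x)=\prod_kQ(n^\ell x_k-i_k)$ for $\ell\ge0$, $\vec i\in\mathbb{Z}^d$, $Q$ the uniform B-spline of order $m$ with knots $0,\dots,m$; $\mathfrak{B}$ the set of all of them; $\mathcal{B}^0=\{\varphi^0_{\vec i}:\vec i\in[-p:0]^d\}$. Children $\mathrm{ch}(\varphi^\ell_{\vec i})=\{\varphi^{\ell+1}_{\vec k}:n\vec i\le\vec k\le n\vec i+sm\}$, extended to sets by union, $\mathrm{ch}^k$ the $k$-fold application. A lineage is a finite $\mathcal{L}\subset\mathfrak{B}$ with $\mathcal{L}\subset\mathcal{B}^0\cup\mathrm{ch}(\mathcal{L})$; its hierarchical generator is $(\mathcal{B}^0\cup\mathrm{ch}(\mathcal{L}))\setminus\mathcal{L}$. *)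

theory Defs
  imports Main
begin

text \<open>A tensor-product B-spline \<open>\<phi>^l_i\<close> is identified with its label \<open>(l, i)\<close>:
  level \<open>l\<close> and index vector \<open>i \<in> \<int>^d\<close> (an int list of length d).
  The map from labels to functions is injective, so this loses nothing.\<close>

type_synonym bspl = "nat \<times> int list"

definition allB :: "nat \<Rightarrow> bspl set" where
  "allB d = {(l, i). length i = d}"

definition B0 :: "nat \<Rightarrow> nat \<Rightarrow> bspl set" where
  "B0 d m = {(0, i) | i. length i = d \<and> (\<forall>c\<in>set i. - (int m - 1) \<le> c \<and> c \<le> 0)}"

definition ch :: "nat \<Rightarrow> nat \<Rightarrow> bspl \<Rightarrow> bspl set" where
  "ch n m \<phi> = {(Suc (fst \<phi>), k) | k. length k = length (snd \<phi>) \<and>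
     (\<forall>j < length k. int n * (snd \<phi> ! j) \<le> k ! j \<and>
                     k ! j \<le> int n * (snd \<phi> ! j) + (int n - 1) * int m)}"

definition chS :: "nat \<Rightarrow> nat \<Rightarrow> bspl set \<Rightarrow> bspl set" where
  "chS n m A = (\<Union>\<phi>\<in>A. ch n m \<phi>)"

definition chpow :: "nat \<Rightarrow> nat \<Rightarrow> nat \<Rightarrow> bspl set \<Rightarrow> bspl set" where
  "chpow n m k A = (chS n m ^^ k) A"

definition lineage :: "nat \<Rightarrow> nat \<Rightarrow> nat \<Rightarrow> bspl set \<Rightarrow> bool" where
  "lineage d n m L \<longleftrightarrow> finite L \<and> L \<subseteq> allB d \<and> L \<subseteq> B0 d m \<union> chS n m L"

definition hgen :: "nat \<Rightarrow> nat \<Rightarrow> nat \<Rightarrow> bspl set \<Rightarrow> bspl set" where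
  "hgen d n m L = (B0 d m \<union> chS n m L) - L"

end

theory Submission
  imports Defs
begin

text \<open>Every function refined in \<open>L\<^sub>*\<close> but not in \<open>L\<close> that is not already in \<open>\<H>\<close> has a
  parent in \<open>\<R> = L\<^sub>* - L\<close>; since parents sit one level lower, following parents
  terminates in \<open>\<M>\<close>. A new generator of \<open>\<H>\<^sub>*\<close> likewise has a parent in \<open>\<R>\<close>, and
  prepending it to that parent's chain exhibits it as a descendant of an element of \<open>\<M>\<close>.\<close>

lemma fst_ch: "\<phi> \<in> ch n m \<psi> \<Longrightarrow> fst \<phi> = Suc (fst \<psi>)"
  by (auto simp: ch_def)

lemma chS_iff: "\<phi> \<in> chS n m A \<longleftrightarrow> (\<exists>\<psi>\<in>A. \<phi> \<in> ch n m \<psi>)"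
  by (simp add: chS_def)

lemma chS_diff_parent:
  assumes "\<phi> \<in> chS n m A" and "\<phi> \<notin> chS n m B"
  shows "\<exists>\<psi>\<in>A - B. \<phi> \<in> ch n m \<psi>"
  using assms by (auto simp: chS_iff)

lemma refined_non_generator_parent:
  assumes "lineage d n m Ls" and "\<psi> \<in> Ls - L" and "\<psi> \<notin> hgen d n m L"
  shows "\<exists>\<psi>'\<in>Ls - L. \<psi> \<in> ch n m \<psi>'"
proof -
  have "\<psi> \<in> B0 d m \<union> chS n m Ls" using assms(1,2) by (auto simp: lineage_def)
  moreover have "\<psi> \<notin> B0 d m \<union> chS n m L" using assms(2,3) by (auto simp: hgen_def)
  ultimately show ?thesis using chS_diff_parent by blast
qed

lemma new_generator_parent:
  assumes "L \<subseteq> Ls" and "\<phi> \<in> hgen d n m Ls - hgen d n m L"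
  shows "\<exists>\<psi>\<in>Ls - L. \<phi> \<in> ch n m \<psi>"
proof -
  have "\<phi> \<in> B0 d m \<union> chS n m Ls" and "\<phi> \<notin> B0 d m \<union> chS n m L"
    using assms by (auto simp: hgen_def)
  then show ?thesis using chS_diff_parent by blast
qed

lemma ancestor_chain:
  assumes "M \<subseteq> R" and parent: "\<And>\<psi>. \<psi> \<in> R - M \<Longrightarrow> \<exists>\<psi>'\<in>R. \<psi> \<in> ch n m \<psi>'"
    and "\<psi>0 \<in> R"
  shows "\<exists>k \<psi>. \<psi> 0 = \<psi>0 \<and> \<psi> k \<in> M \<and> (\<forall>j<k. \<psi> j \<in> R - M \<and> \<psi> j \<in> ch n m (\<psi> (Suc j)))"
  using \<open>\<psi>0 \<in> R\<close>
proof (induction "fst \<psi>0" arbitrary: \<psi>0 rule: less_induct)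
  case less
  show ?case
  proof (cases "\<psi>0 \<in> M")
    case True
    then show ?thesis by (intro exI[of _ 0] exI[of _ "\<lambda>_. \<psi>0"]) auto
  next
    case False
    with less.prems parent obtain \<psi>1 where "\<psi>1 \<in> R" and \<psi>0_ch: "\<psi>0 \<in> ch n m \<psi>1" by blast
    moreover have "fst \<psi>1 < fst \<psi>0" using fst_ch[OF \<psi>0_ch] by simp
    ultimately obtain k \<psi> where "\<psi> 0 = \<psi>1" "\<psi> k \<in> M"
      and chain: "\<forall>j<k. \<psi> j \<in> R - M \<and> \<psi> j \<in> ch n m (\<psi> (Suc j))"
      using less.hyps by blast
    then have "\<forall>j<Suc k. case_nat \<psi>0 \<psi> j \<in> R - M \<and> case_nat \<psi>0 \<psi> j \<in> ch n m (case_nat \<psi>0 \<psi> (Suc j))"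
      using less.prems False \<psi>0_ch by (auto simp: less_Suc_eq_0_disj)
    with \<open>\<psi> k \<in> M\<close> show ?thesis
      by (intro exI[of _ "Suc k"] exI[of _ "case_nat \<psi>0 \<psi>"]) simp
  qed
qed

lemma chain_in_chpow:
  assumes "\<forall>j<k. \<psi> j \<in> ch n m (\<psi> (Suc j))"
  shows "\<psi> 0 \<in> chpow n m k {\<psi> k}"
  using assms
proof (induction k arbitrary: \<psi>)
  case 0
  then show ?case by (simp add: chpow_def)
next
  case (Suc k)
  have "\<psi> 1 \<in> chpow n m k {\<psi> (Suc k)}"
    using Suc.IH[of "\<psi> \<circ> Suc"] Suc.prems by simp
  moreover have "\<psi> 0 \<in> ch n m (\<psi> 1)" using Suc.prems by simp
  ultimately show ?case by (auto simp: chpow_def chS_iff)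
qed

theorem lemma5p9:
  fixes d n m :: nat and L Ls :: "bspl set"
  assumes "d \<ge> 1" and "n \<ge> 2" and "m \<ge> 2"
    and "lineage d n m L" and "lineage d n m Ls" and "L \<subseteq> Ls"
  defines "R \<equiv> Ls - L"
  defines "M \<equiv> R \<inter> hgen d n m L"
  shows "(\<forall>\<psi>0\<in>R. \<exists>k::nat. \<exists>\<psi>::nat \<Rightarrow> bspl. \<psi> 0 = \<psi>0 \<and> \<psi> k \<in> M \<and>
            (\<forall>j<k. \<psi> j \<in> R - M \<and> \<psi> j \<in> ch n m (\<psi> (Suc j))))
       \<and> (\<forall>\<phi>s\<in>hgen d n m Ls - hgen d n m L. \<exists>\<psi>\<in>R. \<phi>s \<in> ch n m \<psi>)
       \<and> (\<forall>\<phi>s\<in>hgen d n m Ls - hgen d n m L. \<exists>k\<ge>1. \<exists>\<phi>\<in>M. \<phi>s \<in> chpow n m k {\<phi>})"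
proof -
  have chains: "\<exists>k \<psi>. \<psi> 0 = \<psi>0 \<and> \<psi> k \<in> M \<and> (\<forall>j<k. \<psi> j \<in> R - M \<and> \<psi> j \<in> ch n m (\<psi> (Suc j)))"
    if "\<psi>0 \<in> R" for \<psi>0
    using ancestor_chain[of M R] refined_non_generator_parent[OF \<open>lineage d n m Ls\<close>] that
    unfolding M_def R_def by blast
  have parents: "\<exists>\<psi>\<in>R. \<phi>s \<in> ch n m \<psi>" if "\<phi>s \<in> hgen d n m Ls - hgen d n m L" for \<phi>s
    using new_generator_parent[OF \<open>L \<subseteq> Ls\<close> that] unfolding R_def .
  have "\<exists>k\<ge>1. \<exists>\<phi>\<in>M. \<phi>s \<in> chpow n m k {\<phi>}" if new: "\<phi>s \<in> hgen d n m Ls - hgen d n m L" for \<phi>s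
  proof -
    obtain \<psi>0 where "\<psi>0 \<in> R" "\<phi>s \<in> ch n m \<psi>0" using parents[OF new] by blast
    then obtain k \<psi> where "\<psi> 0 = \<psi>0" "\<psi> k \<in> M" "\<forall>j<k. \<psi> j \<in> ch n m (\<psi> (Suc j))"
      using chains by blast
    then have "\<forall>j<Suc k. case_nat \<phi>s \<psi> j \<in> ch n m (case_nat \<phi>s \<psi> (Suc j))"
      using \<open>\<phi>s \<in> ch n m \<psi>0\<close> by (auto simp: less_Suc_eq_0_disj)
    from chain_in_chpow[OF this] \<open>\<psi> k \<in> M\<close> show ?thesis by (intro exI[of _ "Suc k"]) auto
  qed
  with chains parents show ?thesis by blast
qed

end
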